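(* Let $k\ge 2$ and let $G$ be a graph admitting an acyclic $k$-coloring. Then $\chi_s(G)\le k\cdot 2^{k-2}$.
   Context: An acyclic $k$-coloring of a graph is a proper vertex coloring with $k$ colors in which every cycle receives at least three colors (any two color classes induce a forest). A signified graph $(G,\Sigma)$ is a graph $G$ with a set $\Sigma\subseteq E(G)$ of negative edges, other edges positive. Resigning $X\subseteq V(G)$ changes the sign of exactly the edges with one endpoint in $X$; two signified graphs on $G$ are equivalent if one is obtained from the other by resigning. A signified homomorphism is a vertex map sending each edge to an edge of the same sign; a signed homomorphism of $(G,\Sigma)$ to $(H,\Lambda)$ is a signified homomorphism between some signified graphs equivalent to $(G,\Sigma)$ and $(H,\Lambda)$. $\chi_s(G,\Sigma)$ is the minimum number of vertices of a signified graph to which $(G,\Sigma)$ admits a signed homomorphism, and $\chi_s(G)=\max_{\Sigma\subseteq E(G)}\chi_s(G,\Sigma)$. *)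

theory Defs
  imports Main
begin

definition graph :: "'a set \<Rightarrow> 'a set set \<Rightarrow> bool" where
  "graph V E \<longleftrightarrow> finite V \<and> (\<forall>e\<in>E. \<exists>u v. e = {u, v} \<and> u \<noteq> v \<and> u \<in> V \<and> v \<in> V)"

definition is_cycle :: "'a set \<Rightarrow> 'a set set \<Rightarrow> 'a list \<Rightarrow> bool" where
  "is_cycle V E cs \<longleftrightarrow> length cs \<ge> 3 \<and> distinct cs \<and> set cs \<subseteq> V \<and>
     (\<forall>i < length cs. {cs ! i, cs ! ((i + 1) mod length cs)} \<in> E)"

definition acyclic_coloring :: "'a set \<Rightarrow> 'a set set \<Rightarrow> nat \<Rightarrow> ('a \<Rightarrow> nat) \<Rightarrow> bool" where
  "acyclic_coloring V E k c \<longleftrightarrow>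
     (\<forall>v\<in>V. c v < k) \<and>
     (\<forall>u v. {u, v} \<in> E \<longrightarrow> c u \<noteq> c v) \<and>
     (\<forall>cs. is_cycle V E cs \<longrightarrow> card (c ` set cs) \<ge> 3)"

definition resign :: "'a set set \<Rightarrow> 'a set set \<Rightarrow> 'a set \<Rightarrow> 'a set set" where
  "resign E \<Sigma> X = (let S = {e\<in>E. card (e \<inter> X) = 1} in (\<Sigma> - S) \<union> (S - \<Sigma>))"

definition sig_equiv :: "'a set \<Rightarrow> 'a set set \<Rightarrow> 'a set set \<Rightarrow> 'a set set \<Rightarrow> bool" where
  "sig_equiv V E \<Sigma> \<Sigma>' \<longleftrightarrow> (\<exists>X. X \<subseteq> V \<and> \<Sigma>' = resign E \<Sigma> X)"

definition signified_hom ::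
  "'a set \<Rightarrow> 'a set set \<Rightarrow> 'a set set \<Rightarrow> 'b set \<Rightarrow> 'b set set \<Rightarrow> 'b set set \<Rightarrow> ('a \<Rightarrow> 'b) \<Rightarrow> bool" where
  "signified_hom VG EG SG VH EH SH f \<longleftrightarrow>
     (\<forall>v\<in>VG. f v \<in> VH) \<and>
     (\<forall>u v. {u, v} \<in> EG \<longrightarrow> {f u, f v} \<in> EH \<and> ({u, v} \<in> SG \<longleftrightarrow> {f u, f v} \<in> SH))"

definition signed_hom ::
  "'a set \<Rightarrow> 'a set set \<Rightarrow> 'a set set \<Rightarrow> 'b set \<Rightarrow> 'b set set \<Rightarrow> 'b set set \<Rightarrow> bool" where
  "signed_hom VG EG SG VH EH SH \<longleftrightarrow>
     (\<exists>SG' SH' f. sig_equiv VG EG SG SG' \<and> sig_equiv VH EH SH SH' \<and>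
        signified_hom VG EG SG' VH EH SH' f)"

(* chi_s(G,Sigma): least order of a signified (finite simple) graph receiving a signed
   homomorphism; target vertices are taken in nat (any finite graph can be relabelled). *)
definition chi_s_sig :: "'a set \<Rightarrow> 'a set set \<Rightarrow> 'a set set \<Rightarrow> nat" where
  "chi_s_sig V E \<Sigma> = (LEAST n. \<exists>(VH :: nat set) EH SH.
       graph VH EH \<and> SH \<subseteq> EH \<and> card VH = n \<and> signed_hom V E \<Sigma> VH EH SH)"

definition chi_s :: "'a set \<Rightarrow> 'a set set \<Rightarrow> nat" where
  "chi_s V E = Max {chi_s_sig V E \<Sigma> | \<Sigma>. \<Sigma> \<subseteq> E}"

end

theory Submission
  imports Defs
begin

text \<open>Two colour classes of an acyclic colouring span a forest, and every signature on a
  forest is balanced: there is a potential \<open>p\<close> such that \<open>uv\<close> is negative iff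
  \<open>p u \<noteq> p v\<close>. Take such a potential for every pair of colours and fix a reference colour
  \<open>r i \<noteq> i\<close> for every colour \<open>i\<close>. Resigning at the vertices \<open>w\<close> whose potential for the
  pair \<open>{c w, r (c w)}\<close> holds, the sign of an edge \<open>uv\<close> becomes \<open>b u (c v) \<noteq> b v (c u)\<close>,
  where \<open>b w j\<close> compares the potentials of \<open>w\<close> for the pairs \<open>{c w, j}\<close> and
  \<open>{c w, r (c w)}\<close> and so vanishes at \<open>j = r (c w)\<close>. Hence, as far as signs are concerned, a
  vertex is described by its colour and a subset of the \<open>k - 2\<close> remaining colours, and
  identifying vertices with equal descriptions is a signified homomorphism onto a signified
  graph with at most \<open>k * 2 ^ (k - 2)\<close> vertices.\<close>

definition forest :: "'a set set \<Rightarrow> bool" where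
  "forest F \<longleftrightarrow> (\<forall>cs. \<not> is_cycle UNIV F cs)"

lemma forest_subset: "forest G \<Longrightarrow> F \<subseteq> G \<Longrightarrow> forest F"
  unfolding forest_def is_cycle_def by (meson subsetD)

lemma rtranclp_imp_distinct_walk:
  assumes "(\<lambda>a b. {a,b} \<in> F)\<^sup>*\<^sup>* u v"
  shows "\<exists>xs. xs \<noteq> [] \<and> hd xs = u \<and> last xs = v \<and> distinct xs \<and>
    successively (\<lambda>a b. {a,b} \<in> F) xs"
  using assms
proof (induction rule: rtranclp_induct)
  case base
  show ?case by (intro exI[of _ "[u]"]) auto
next
  case (step w x)
  then obtain xs where xs: "xs \<noteq> []" "hd xs = u" "last xs = w" "distinct xs"
    "successively (\<lambda>a b. {a,b} \<in> F) xs" by blast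
  show ?case
  proof (cases "x \<in> set xs")
    case True
    then obtain ys zs where yz: "xs = ys @ x # zs" by (meson split_list)
    have "successively (\<lambda>a b. {a,b} \<in> F) (ys @ [x])"
      using xs(5) unfolding yz by (auto simp: successively_append_iff successively_Cons)
    moreover have "hd (ys @ [x]) = u" using xs(2) yz by (cases ys) auto
    ultimately show ?thesis using xs(4) yz by (intro exI[of _ "ys @ [x]"]) auto
  next
    case False
    have "successively (\<lambda>a b. {a,b} \<in> F) (xs @ [x])"
      using xs step(2) by (auto simp: successively_append_iff)
    then show ?thesis using xs False by (intro exI[of _ "xs @ [x]"]) auto
  qed
qed

lemma distinct_walk_closing_edge_not_forest:
  assumes walk: "xs \<noteq> []" "hd xs = u" "last xs = v" "distinct xs"
      "successively (\<lambda>a b. {a,b} \<in> F) xs"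
    and "u \<noteq> v" "{u,v} \<notin> F"
  shows "\<not> forest (insert {u,v} F)"
proof -
  let ?n = "length xs"
  have first: "xs ! 0 = u" and final: "xs ! (?n - 1) = v"
    using walk(1-3) by (simp_all add: hd_conv_nth last_conv_nth)
  have "?n \<noteq> 1" using first final \<open>u \<noteq> v\<close> by auto
  moreover have "?n \<noteq> 2"
  proof
    assume "?n = 2"
    then have "{xs ! 0, xs ! Suc 0} \<in> F" using successively_nth[OF walk(5), of 0] by simp
    moreover have "xs ! Suc 0 = v" using final \<open>?n = 2\<close> by simp
    ultimately show False using first \<open>{u,v} \<notin> F\<close> by simp
  qed
  moreover have "?n \<noteq> 0" using walk(1) by simp
  ultimately have long: "?n \<ge> 3" by linarith
  have "{xs ! i, xs ! ((i + 1) mod ?n)} \<in> insert {u,v} F" if "i < ?n" for i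
  proof (cases "Suc i < ?n")
    case True
    then show ?thesis using successively_nth[OF walk(5) True] by simp
  next
    case False
    then have "i = ?n - 1" "Suc i = ?n" using that by auto
    then show ?thesis using first final by (simp add: insert_commute)
  qed
  then have "is_cycle UNIV (insert {u,v} F) xs"
    unfolding is_cycle_def using long walk(4) by blast
  then show ?thesis unfolding forest_def by blast
qed

lemma forest_insert_edge_disconnected:
  assumes "forest (insert {u,v} F)" "u \<noteq> v" "{u,v} \<notin> F"
  shows "\<not> (\<lambda>a b. {a,b} \<in> F)\<^sup>*\<^sup>* u v"
proof
  assume "(\<lambda>a b. {a,b} \<in> F)\<^sup>*\<^sup>* u v"
  from rtranclp_imp_distinct_walk[OF this] obtain xs
    where "xs \<noteq> []" "hd xs = u" "last xs = v" "distinct xs"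
      "successively (\<lambda>a b. {a,b} \<in> F) xs"
    by blast
  from distinct_walk_closing_edge_not_forest[OF this assms(2,3)] assms(1) show False by simp
qed

lemma forest_signature_potential:
  assumes "finite F" "\<forall>e\<in>F. \<exists>u v. e = {u,v} \<and> u \<noteq> v" "forest F"
  shows "\<exists>p :: 'a \<Rightarrow> bool. \<forall>u v. {u,v} \<in> F \<longrightarrow> ({u,v} \<in> \<Sigma> \<longleftrightarrow> p u \<noteq> p v)"
  using assms
proof (induction F rule: finite_induct)
  case empty
  then show ?case by auto
next
  case (insert e F)
  obtain u v where e: "e = {u,v}" "u \<noteq> v" using insert.prems(1) by blast
  have "forest F" using forest_subset[OF insert.prems(2)] by blast
  moreover have "\<forall>e\<in>F. \<exists>u v. e = {u,v} \<and> u \<noteq> v" using insert.prems(1) by blast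
  ultimately obtain p :: "'a \<Rightarrow> bool"
    where p: "\<forall>a b. {a,b} \<in> F \<longrightarrow> ({a,b} \<in> \<Sigma> \<longleftrightarrow> p a \<noteq> p b)"
    using insert.IH by blast
  let ?R = "(\<lambda>a b. {a,b} \<in> F)\<^sup>*\<^sup>*"
  have "\<not> ?R u v"
    using forest_insert_edge_disconnected[of u v F] insert.prems(2) insert.hyps(2) e by simp
  define flip where "flip \<longleftrightarrow> ({u,v} \<in> \<Sigma> \<longleftrightarrow> p u = p v)"
  \<comment> \<open>Flip \<open>p\<close> on the component of \<open>u\<close>; since \<open>v\<close> lies in another component, only the
     relation across the new edge changes.\<close>
  define p' where "p' w \<longleftrightarrow> p w \<noteq> (?R u w \<and> flip)" for w
  have R_step: "?R u x \<Longrightarrow> {x,y} \<in> F \<Longrightarrow> ?R u y" for x y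
    by (rule rtranclp.rtrancl_into_rtrancl)
  have old: "{a,b} \<in> \<Sigma> \<longleftrightarrow> p' a \<noteq> p' b" if ab: "{a,b} \<in> F" for a b
  proof -
    have "{b,a} \<in> F" using ab by (simp add: insert_commute)
    then have "?R u a \<longleftrightarrow> ?R u b" using R_step ab by blast
    then have "p' a \<noteq> p' b \<longleftrightarrow> p a \<noteq> p b" unfolding p'_def by auto
    then show ?thesis using p ab by simp
  qed
  have "?R u u" by (rule rtranclp.rtrancl_refl)
  then have new: "{u,v} \<in> \<Sigma> \<longleftrightarrow> p' u \<noteq> p' v"
    using \<open>\<not> ?R u v\<close> unfolding p'_def flip_def by auto
  have "{a,b} \<in> \<Sigma> \<longleftrightarrow> p' a \<noteq> p' b" if "{a,b} \<in> insert e F" for a b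
  proof (cases "{a,b} = {u,v}")
    case True
    then have "a = u \<and> b = v \<or> a = v \<and> b = u" by (simp add: doubleton_eq_iff)
    moreover have "{v,u} = {u,v}" by (rule insert_commute)
    ultimately show ?thesis using new by auto
  next
    case False
    then show ?thesis using that old e(1) by simp
  qed
  then show ?case by blast
qed

lemma graph_edgeD:
  assumes "graph V E" "{u,v} \<in> E"
  shows "u \<noteq> v" "u \<in> V" "v \<in> V"
proof -
  obtain a b where "{u,v} = {a,b}" "a \<noteq> b" "a \<in> V" "b \<in> V"
    using assms unfolding graph_def by blast
  then show "u \<noteq> v" "u \<in> V" "v \<in> V" by (auto simp: doubleton_eq_iff)
qed

lemma graph_finite_edges:
  assumes "graph V E"
  shows "finite E"
proof -
  have "finite V" and edges: "\<forall>e\<in>E. \<exists>u v. e = {u,v} \<and> u \<noteq> v \<and> u \<in> V \<and> v \<in> V"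
    using assms unfolding graph_def by simp_all
  have "E \<subseteq> Pow V"
  proof
    fix e assume "e \<in> E"
    then obtain u v where "e = {u,v}" "u \<in> V" "v \<in> V" using edges by blast
    then show "e \<in> Pow V" by simp
  qed
  with \<open>finite V\<close> show ?thesis by (meson finite_Pow_iff finite_subset)
qed

lemma acyclic_coloring_bichromatic_forest:
  assumes G: "graph V E" and col: "acyclic_coloring V E k c"
  shows "forest {e \<in> E. c ` e = P}"
  unfolding forest_def
proof (intro allI notI)
  fix cs assume cyc: "is_cycle UNIV {e \<in> E. c ` e = P} cs"
  let ?n = "length cs"
  have step: "{cs ! i, cs ! ((i + 1) mod ?n)} \<in> E" "c ` {cs ! i, cs ! ((i + 1) mod ?n)} = P"
    if "i < ?n" for i
    using cyc that unfolding is_cycle_def by auto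
  have on_edge: "cs ! i \<in> V \<and> c (cs ! i) \<in> P" if "i < ?n" for i
    using step[OF that] graph_edgeD(2)[OF G] by auto
  have "?n \<ge> 3" using cyc unfolding is_cycle_def by auto
  then have "P = {c (cs ! 0), c (cs ! 1)}" using step(2)[of 0] by (cases cs) auto
  have "c ` set cs \<subseteq> P"
  proof
    fix x assume "x \<in> c ` set cs"
    then obtain i where "i < ?n" "x = c (cs ! i)" by (auto simp: in_set_conv_nth)
    then show "x \<in> P" using on_edge by blast
  qed
  then have "card (c ` set cs) \<le> card P" by (intro card_mono) (simp_all add: \<open>P = _\<close>)
  also have "\<dots> \<le> 2" unfolding \<open>P = _\<close> by (simp add: card_insert_if)
  finally have "card (c ` set cs) \<le> 2" .
  moreover have "is_cycle V E cs"
    using cyc on_edge step(1) unfolding is_cycle_def by (auto simp: in_set_conv_nth)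
  then have "card (c ` set cs) \<ge> 3" using col unfolding acyclic_coloring_def by blast
  ultimately show False by simp
qed

lemma acyclic_coloring_signature_potential:
  assumes G: "graph V E" and col: "acyclic_coloring V E k c"
  obtains p :: "nat set \<Rightarrow> 'a \<Rightarrow> bool"
  where "\<And>u v. {u,v} \<in> E \<Longrightarrow> {u,v} \<in> \<Sigma> \<longleftrightarrow> p {c u, c v} u \<noteq> p {c u, c v} v"
proof -
  have "\<exists>q :: 'a \<Rightarrow> bool. \<forall>u v. {u,v} \<in> {e \<in> E. c ` e = P} \<longrightarrow> ({u,v} \<in> \<Sigma> \<longleftrightarrow> q u \<noteq> q v)"
    for P
  proof -
    have "finite {e \<in> E. c ` e = P}" using graph_finite_edges[OF G] by simp
    moreover have "\<forall>e\<in>{e \<in> E. c ` e = P}. \<exists>u v. e = {u,v} \<and> u \<noteq> v"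
      using G unfolding graph_def by fast
    ultimately show ?thesis
      using acyclic_coloring_bichromatic_forest[OF G col] by (rule forest_signature_potential)
  qed
  then obtain p :: "nat set \<Rightarrow> 'a \<Rightarrow> bool" where p: "\<And>P u v. {u,v} \<in> {e \<in> E. c ` e = P} \<Longrightarrow>
      {u,v} \<in> \<Sigma> \<longleftrightarrow> p P u \<noteq> p P v"
    by (metis (no_types) choice)
  show thesis
  proof (rule that)
    fix u v assume "{u,v} \<in> E"
    then show "{u,v} \<in> \<Sigma> \<longleftrightarrow> p {c u, c v} u \<noteq> p {c u, c v} v" by (intro p) simp
  qed
qed

lemma resign_edge_iff:
  assumes "{u,v} \<in> E" "u \<noteq> v"
  shows "{u,v} \<in> resign E \<Sigma> X \<longleftrightarrow> ({u,v} \<in> \<Sigma>) \<noteq> ((u \<in> X) \<noteq> (v \<in> X))"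
proof -
  have "card ({u,v} \<inter> X) = 1 \<longleftrightarrow> (u \<in> X) \<noteq> (v \<in> X)"
    using assms(2) by (cases "u \<in> X"; cases "v \<in> X") (auto simp: Int_insert_left)
  then show ?thesis using assms(1) unfolding resign_def Let_def by blast
qed

lemma resign_subset: "\<Sigma> \<subseteq> E \<Longrightarrow> resign E \<Sigma> X \<subseteq> E"
  unfolding resign_def Let_def by blast

lemma sig_equiv_refl: "sig_equiv V E \<Sigma> \<Sigma>"
  unfolding sig_equiv_def resign_def Let_def by (rule exI[of _ "{}"]) simp

lemma chi_s_sig_le_card_image:
  fixes f :: "'a \<Rightarrow> 'b"
  assumes G: "graph V E" and equiv: "sig_equiv V E \<Sigma> \<Sigma>'" and \<Sigma>'E: "\<Sigma>' \<subseteq> E"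
    and proper: "\<And>u v. {u,v} \<in> E \<Longrightarrow> f u \<noteq> f v"
    and consistent: "\<And>u v u' v'. {u,v} \<in> E \<Longrightarrow> {u',v'} \<in> \<Sigma>' \<Longrightarrow>
      f u = f u' \<Longrightarrow> f v = f v' \<Longrightarrow> {u,v} \<in> \<Sigma>'"
  shows "chi_s_sig V E \<Sigma> \<le> card (f ` V)"
proof -
  have "finite (f ` V)" using G unfolding graph_def by simp
  then obtain h :: "'b \<Rightarrow> nat" where h: "inj_on h (f ` V)"
    using ex_bij_betw_finite_nat bij_betw_imp_inj_on by metis
  define g where "g = h \<circ> f"
  have g_eq: "g u = g v \<longleftrightarrow> f u = f v" if "u \<in> V" "v \<in> V" for u v
    using h that unfolding g_def inj_on_def by auto
  define VH where "VH = g ` V"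
  define EH where "EH = {{g u, g v} | u v. {u,v} \<in> E}"
  define SH where "SH = {{g u, g v} | u v. {u,v} \<in> \<Sigma>'}"
  have "graph VH EH"
    unfolding graph_def
  proof
    show "finite VH" unfolding VH_def using G unfolding graph_def by simp
    show "\<forall>e\<in>EH. \<exists>x y. e = {x,y} \<and> x \<noteq> y \<and> x \<in> VH \<and> y \<in> VH"
    proof
      fix e assume "e \<in> EH"
      then obtain u v where uv: "e = {g u, g v}" "{u,v} \<in> E" unfolding EH_def by blast
      then have "g u \<noteq> g v" "u \<in> V" "v \<in> V"
        using g_eq graph_edgeD[OF G uv(2)] proper[OF uv(2)] by auto
      then show "\<exists>x y. e = {x,y} \<and> x \<noteq> y \<and> x \<in> VH \<and> y \<in> VH"
        using uv(1) unfolding VH_def by blast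
    qed
  qed
  moreover have "SH \<subseteq> EH" using \<Sigma>'E unfolding SH_def EH_def by blast
  moreover have "card VH = card (f ` V)"
    unfolding VH_def g_def image_comp[symmetric] using h by (rule card_image)
  moreover have "signified_hom V E \<Sigma>' VH EH SH g"
    unfolding signified_hom_def
  proof (intro conjI allI impI)
    show "\<forall>v\<in>V. g v \<in> VH" unfolding VH_def by blast
    fix u v assume uv: "{u,v} \<in> E"
    show "{g u, g v} \<in> EH" unfolding EH_def using uv by blast
    show "{u,v} \<in> \<Sigma>' \<longleftrightarrow> {g u, g v} \<in> SH"
    proof
      assume "{u,v} \<in> \<Sigma>'"
      then show "{g u, g v} \<in> SH" unfolding SH_def by blast
    next
      assume "{g u, g v} \<in> SH"
      then obtain u' v' where uv': "{g u, g v} = {g u', g v'}" "{u',v'} \<in> \<Sigma>'"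
        unfolding SH_def by blast
      have vu': "{v',u'} \<in> \<Sigma>'" using uv'(2) by (simp add: insert_commute)
      have "{u',v'} \<in> E" using uv'(2) \<Sigma>'E by blast
      then have "u \<in> V" "v \<in> V" "u' \<in> V" "v' \<in> V"
        using graph_edgeD[OF G uv] graph_edgeD[OF G] by blast+
      then have "f u = f u' \<and> f v = f v' \<or> f u = f v' \<and> f v = f u'"
        using uv'(1) g_eq by (auto simp: doubleton_eq_iff)
      then show "{u,v} \<in> \<Sigma>'" using consistent[OF uv uv'(2)] consistent[OF uv vu'] by blast
    qed
  qed
  then have "signed_hom V E \<Sigma> VH EH SH"
    unfolding signed_hom_def using equiv sig_equiv_refl by blast
  ultimately have "\<exists>(VH :: nat set) EH SH. graph VH EH \<and> SH \<subseteq> EH \<and>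
      card VH = card (f ` V) \<and> signed_hom V E \<Sigma> VH EH SH"
    by blast
  then show ?thesis unfolding chi_s_sig_def by (rule Least_le)
qed

lemma card_Sigma_Pow_Diff_pair:
  assumes "\<And>i. i < k \<Longrightarrow> r i < k \<and> r i \<noteq> i"
  shows "card (SIGMA i:{..<k}. Pow ({..<k} - {i, r i})) = k * 2 ^ (k - 2)"
proof -
  have "card (Pow ({..<k} - {i, r i})) = 2 ^ (k - 2)" if "i < k" for i
  proof -
    have "card {i, r i} = 2" using assms[OF that] by auto
    moreover have "{i, r i} \<subseteq> {..<k}" using assms[OF that] that by auto
    ultimately show ?thesis by (simp add: card_Pow card_Diff_subset)
  qed
  then show ?thesis by (simp add: card_SigmaI)
qed

lemma chi_s_sig_le_acyclic_coloring:
  assumes G: "graph V E" and k: "k \<ge> 2" and col: "acyclic_coloring V E k c" and \<Sigma>E: "\<Sigma> \<subseteq> E"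
  shows "chi_s_sig V E \<Sigma> \<le> k * 2 ^ (k - 2)"
proof -
  have c_lt: "\<And>v. v \<in> V \<Longrightarrow> c v < k" and proper: "\<And>u v. {u,v} \<in> E \<Longrightarrow> c u \<noteq> c v"
    using col unfolding acyclic_coloring_def by auto
  obtain p :: "nat set \<Rightarrow> 'a \<Rightarrow> bool"
    where p: "\<And>u v. {u,v} \<in> E \<Longrightarrow> {u,v} \<in> \<Sigma> \<longleftrightarrow> p {c u, c v} u \<noteq> p {c u, c v} v"
    using acyclic_coloring_signature_potential[OF G col] by blast
  define r :: "nat \<Rightarrow> nat" where "r i = (if i = 0 then 1 else 0)" for i
  have r: "i < k \<Longrightarrow> r i < k \<and> r i \<noteq> i" for i using k unfolding r_def by auto
  define X where "X = {v \<in> V. p {c v, r (c v)} v}"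
  define b where "b w j \<longleftrightarrow> p {c w, j} w \<noteq> p {c w, r (c w)} w" for w j
  define A where "A w = {j \<in> {..<k} - {c w, r (c w)}. b w j}" for w
  have sign: "{u,v} \<in> resign E \<Sigma> X \<longleftrightarrow> b u (c v) \<noteq> b v (c u)" if uv: "{u,v} \<in> E" for u v
  proof -
    have "u \<in> V" "v \<in> V" "u \<noteq> v" using graph_edgeD[OF G uv] by auto
    moreover have "{c v, c u} = {c u, c v}" by (rule insert_commute)
    ultimately show ?thesis using resign_edge_iff[OF uv] p[OF uv] unfolding X_def b_def by auto
  qed
  have b_A: "b w j \<longleftrightarrow> j \<in> A w" if "j < k" "j \<noteq> c w" for w j
    using that unfolding A_def b_def by auto
  have "chi_s_sig V E \<Sigma> \<le> card ((\<lambda>v. (c v, A v)) ` V)"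
  proof (rule chi_s_sig_le_card_image[OF G])
    show "sig_equiv V E \<Sigma> (resign E \<Sigma> X)"
      unfolding sig_equiv_def by (rule exI[of _ X]) (simp add: X_def)
    show "resign E \<Sigma> X \<subseteq> E" using \<Sigma>E by (rule resign_subset)
    show "(c u, A u) \<noteq> (c v, A v)" if "{u,v} \<in> E" for u v using proper[OF that] by simp
    show "{u,v} \<in> resign E \<Sigma> X"
      if uv: "{u,v} \<in> E" and uv': "{u',v'} \<in> resign E \<Sigma> X"
        and "(c u, A u) = (c u', A u')" "(c v, A v) = (c v', A v')" for u v u' v'
    proof -
      have "{u',v'} \<in> E" using uv' resign_subset[OF \<Sigma>E] by blast
      have "c u < k" "c v < k" "c u \<noteq> c v"
        using c_lt graph_edgeD[OF G uv] proper[OF uv] by auto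
      then have "b u (c v) = b u' (c v')" "b v (c u) = b v' (c u')"
        using b_A[of "c v" u] b_A[of "c v" u'] b_A[of "c u" v] b_A[of "c u" v'] that(3,4)
        by auto
      then show ?thesis using sign[OF uv] sign[OF \<open>{u',v'} \<in> E\<close>] uv' by simp
    qed
  qed
  also have "\<dots> \<le> card (SIGMA i:{..<k}. Pow ({..<k} - {i, r i}))"
    by (rule card_mono) (auto simp: A_def c_lt)
  also have "\<dots> = k * 2 ^ (k - 2)" using r by (rule card_Sigma_Pow_Diff_pair)
  finally show ?thesis .
qed

theorem mainTheorem16:
  fixes V :: "'a set" and E :: "'a set set" and k :: nat and c :: "'a \<Rightarrow> nat"
  assumes "graph V E"
    and "k \<ge> 2"
    and "acyclic_coloring V E k c"
  shows "chi_s V E \<le> k * 2 ^ (k - 2)"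
proof -
  have "{chi_s_sig V E \<Sigma> | \<Sigma>. \<Sigma> \<subseteq> E} = chi_s_sig V E ` Pow E" by auto
  moreover have "finite (Pow E)" using graph_finite_edges[OF assms(1)] by simp
  ultimately show ?thesis
    unfolding chi_s_def using chi_s_sig_le_acyclic_coloring[OF assms] by (auto intro: Max.boundedI)
qed

end
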